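(* Let $n\ge2$, $m\ge0$, $p$, $q$ be fixed integers with $0\le p\le 2n-4$, $0\le q\le 2n-3$, $p+q\le 2n-3$. Then there is a polynomial $\alpha_{p,q}(j)$ in $j$ of degree at most $2(2n-3-p-q)+q-1$ (the zero polynomial if this number is negative) such that for every integer $j$ with $1\le j\le n-1$, the coefficient of $x^pz^q$ in $$(2x+m+z+1)_{j-1}\,(x+2z-j+2)_{j-1}\,(x+m+2j-z+2)_{2n-2j-2}\,(m+3j-3z)$$ equals $2^j\alpha_{p,q}(j)$.
   Context: $(a)_k:=a(a+1)\cdots(a+k-1)$ for $k\ge1$, $(a)_0:=1$; here $x,z$ are indeterminates. *)

theory Defs
  imports "HOL-Computational_Algebra.Polynomial"
begin

text \<open>Bivariate integer polynomials in x and z are encoded as \<open>int poly poly\<close>: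
  the outer variable is x, the inner (coefficient) variable is z.\<close>

definition varX :: "int poly poly" where
  "varX = [:0, 1:]"

definition varZ :: "int poly poly" where
  "varZ = [:[:0, 1:]:]"

definition cst :: "int \<Rightarrow> int poly poly" where
  "cst c = [:[:c:]:]"

definition coeffXZ :: "int poly poly \<Rightarrow> nat \<Rightarrow> nat \<Rightarrow> int" where
  "coeffXZ P p q = coeff (coeff P p) q"

definition prodA10 :: "nat \<Rightarrow> int \<Rightarrow> nat \<Rightarrow> int poly poly" where
  "prodA10 n m j =
     pochhammer (cst 2 * varX + cst m + varZ + cst 1) (j - 1)
   * pochhammer (varX + cst 2 * varZ - cst (int j) + cst 2) (j - 1)
   * pochhammer (varX + cst m + cst (2 * int j) - varZ + cst 2) (2 * n - 2 * j - 2)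
   * (cst m + cst (3 * int j) - cst 3 * varZ)"

end

theory Submission
  imports Defs
begin

text \<open>
  The product consists of \<open>2n - 3\<close> linear factors \<open>a x + b z + c\<close>. Replacing every factor by
  \<open>c x + b z + a\<close> turns a polynomial P of total degree at most K into \<open>x^K P(1/x, z/x)\<close>, so the
  coefficient of \<open>x^p z^q\<close> becomes the coefficient of \<open>x^e z^q\<close>, \<open>e = 2n - 3 - p - q\<close>, of the
  reversed product. After reversal (and after listing the factors of the second and third Pochhammer
  symbols backwards) the constant terms are 2, 1, 1 and 0, the x-coefficients are linear in the
  factor index and only the numbers of factors depend on j.

  For \<open>\<Prod>i<L. a + b z + (c + s i) x\<close> the coefficient of \<open>x^e z^q\<close>, divided by \<open>a^L\<close>, obeys a
  first-order recurrence in L whose increment involves the coefficients of \<open>x^(e-1) z^q\<close> (times a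
  linear function of L) and \<open>x^e z^(q-1)\<close>; summation raises the degree by one, so it is a
  polynomial in L of degree at most \<open>2e + q\<close>. These weighted degree bounds add up under
  multiplication, and the last factor, having constant term 0, lowers the bound by one. Only the
  first Pochhammer symbol contributes a power of 2, namely \<open>2^(j-1)\<close>.
\<close>

definition linXZ :: "int \<Rightarrow> int \<Rightarrow> int \<Rightarrow> int poly poly" where
  "linXZ a b c = cst a * varX + cst b * varZ + cst c"

lemma cst_eq_of_int: "cst c = of_int c"
  by (simp add: cst_def of_int_poly)

lemma coeffXZ_1: "coeffXZ 1 p q = (if p = 0 \<and> q = 0 then 1 else 0)"
  by (cases p; cases q) (simp_all add: coeffXZ_def one_pCons)

lemma coeffXZ_mult:
  "coeffXZ (P * Q) p q = (\<Sum>p'\<le>p. \<Sum>q'\<le>q. coeffXZ P p' q' * coeffXZ Q (p - p') (q - q'))"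
  by (simp add: coeffXZ_def coeff_mult coeff_sum)

lemma coeffXZ_mult_linXZ:
  "coeffXZ (P * linXZ a b c) p q =
     (if p = 0 then 0 else a * coeffXZ P (p - 1) q) + (if q = 0 then 0 else b * coeffXZ P p (q - 1))
     + c * coeffXZ P p q"
  by (cases p; cases q)
    (simp_all add: linXZ_def coeffXZ_def cst_def varX_def varZ_def algebra_simps)

lemma coeffXZ_linXZ:
  "coeffXZ (linXZ a b c) p q =
     (if p = 1 \<and> q = 0 then a else if p = 0 \<and> q = 1 then b else if p = 0 \<and> q = 0 then c else 0)"
  using coeffXZ_mult_linXZ[of 1 a b c p q] by (auto simp: coeffXZ_1)

text \<open>\<open>x_reversal K P R\<close>: P has total degree at most K and \<open>R(x, z) = x^K P(1/x, z/x)\<close>.\<close>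

definition x_reversal :: "nat \<Rightarrow> int poly poly \<Rightarrow> int poly poly \<Rightarrow> bool" where
  "x_reversal K P R \<longleftrightarrow>
     (\<forall>p q. p + q \<le> K \<longrightarrow> coeffXZ P p q = coeffXZ R (K - p - q) q) \<and>
     (\<forall>p q. K < p + q \<longrightarrow> coeffXZ P p q = 0 \<and> coeffXZ R p q = 0)"

lemma x_reversal_1: "x_reversal 0 1 1"
  by (auto simp: x_reversal_def coeffXZ_1)

lemma x_reversal_mult_linXZ:
  assumes "x_reversal K P R"
  shows "x_reversal (Suc K) (P * linXZ a b c) (R * linXZ c b a)"
proof -
  from assms have rev: "\<And>p q. p + q \<le> K \<Longrightarrow> coeffXZ P p q = coeffXZ R (K - p - q) q"
    and vanish: "\<And>p q. K < p + q \<Longrightarrow> coeffXZ P p q = 0 \<and> coeffXZ R p q = 0"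
    by (auto simp: x_reversal_def)
  have "coeffXZ (P * linXZ a b c) p q = coeffXZ (R * linXZ c b a) (Suc K - p - q) q"
    if "p + q \<le> Suc K" for p q
  proof -
    have "(if p = 0 then 0 else a * coeffXZ P (p - 1) q) = a * coeffXZ R (Suc K - p - q) q"
      using that rev[of "p - 1" q] vanish[of "Suc K - p - q" q] by (cases p) auto
    moreover have "(if q = 0 then 0 else b * coeffXZ P p (q - 1))
        = (if q = 0 then 0 else b * coeffXZ R (Suc K - p - q) (q - 1))"
      using that rev[of p "q - 1"] by (cases q) auto
    moreover have "c * coeffXZ P p q
        = (if Suc K - p - q = 0 then 0 else c * coeffXZ R (Suc K - p - q - 1) q)"
      using that rev[of p q] vanish[of p q] by (cases "p + q = Suc K") (auto simp: Suc_diff_le)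
    ultimately show ?thesis
      unfolding coeffXZ_mult_linXZ by simp
  qed
  moreover have "coeffXZ (P * linXZ a b c) p q = 0 \<and> coeffXZ (R * linXZ c b a) p q = 0"
    if "Suc K < p + q" for p q
  proof -
    have "p \<noteq> 0 \<Longrightarrow> K < p - 1 + q" "q \<noteq> 0 \<Longrightarrow> K < p + (q - 1)" "K < p + q"
      using that by arith+
    then show ?thesis
      unfolding coeffXZ_mult_linXZ using vanish by auto
  qed
  ultimately show ?thesis
    by (simp add: x_reversal_def)
qed

lemma x_reversal_mult_prod_linXZ:
  assumes "x_reversal K P R"
  shows "x_reversal (K + L)
    (P * (\<Prod>i<L. linXZ (a i) (b i) (c i))) (R * (\<Prod>i<L. linXZ (c i) (b i) (a i)))"
proof (induction L)
  case 0
  show ?case using assms by simp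
next
  case (Suc L)
  then show ?case
    using x_reversal_mult_linXZ[OF Suc.IH, of "a L" "b L" "c L"] by (simp add: mult.assoc)
qed

definition poly_deg_le_on :: "nat set \<Rightarrow> int \<Rightarrow> (nat \<Rightarrow> 'a::field_char_0) \<Rightarrow> bool" where
  "poly_deg_le_on S d f \<longleftrightarrow>
     (\<exists>\<alpha>. (\<alpha> = 0 \<or> int (degree \<alpha>) \<le> d) \<and> (\<forall>j\<in>S. f j = poly \<alpha> (of_nat j)))"

lemma poly_deg_le_on_zero: "(\<And>j. j \<in> S \<Longrightarrow> f j = 0) \<Longrightarrow> poly_deg_le_on S d f"
  unfolding poly_deg_le_on_def by (intro exI[of _ 0]) simp

lemma poly_deg_le_on_const: "0 \<le> d \<Longrightarrow> poly_deg_le_on S d (\<lambda>_. c)"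
  unfolding poly_deg_le_on_def by (intro exI[of _ "[:c:]"]) simp

lemma poly_deg_le_on_linear: "poly_deg_le_on S 1 (\<lambda>j. c + k * of_nat j)"
  unfolding poly_deg_le_on_def by (intro exI[of _ "[:c, k:]"]) (simp add: degree_pCons_eq_if)

lemma poly_deg_le_on_power: "poly_deg_le_on S (int k) (\<lambda>j. of_nat j ^ k)"
  unfolding poly_deg_le_on_def
  by (intro exI[of _ "monom 1 k"]) (simp add: poly_monom degree_monom_eq)

lemma poly_deg_le_on_cong:
  "poly_deg_le_on S d f \<Longrightarrow> (\<And>j. j \<in> S \<Longrightarrow> f j = g j) \<Longrightarrow> poly_deg_le_on S d g"
  unfolding poly_deg_le_on_def by auto

lemma poly_deg_le_on_mono: "poly_deg_le_on S d f \<Longrightarrow> d \<le> d' \<Longrightarrow> poly_deg_le_on S d' f"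
  unfolding poly_deg_le_on_def by (blast intro: order.trans)

lemma poly_deg_le_on_add:
  assumes "poly_deg_le_on S d f" and "poly_deg_le_on S d g"
  shows "poly_deg_le_on S d (\<lambda>j. f j + g j)"
proof -
  obtain \<alpha> \<beta> where \<alpha>: "\<alpha> = 0 \<or> int (degree \<alpha>) \<le> d" "\<forall>j\<in>S. f j = poly \<alpha> (of_nat j)"
    and \<beta>: "\<beta> = 0 \<or> int (degree \<beta>) \<le> d" "\<forall>j\<in>S. g j = poly \<beta> (of_nat j)"
    using assms unfolding poly_deg_le_on_def by blast
  have "\<alpha> + \<beta> = 0 \<or> int (degree (\<alpha> + \<beta>)) \<le> d"
    using \<alpha>(1) \<beta>(1) degree_add_le_max[of \<alpha> \<beta>] by auto
  with \<alpha>(2) \<beta>(2) show ?thesis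
    unfolding poly_deg_le_on_def by (intro exI[of _ "\<alpha> + \<beta>"]) simp
qed

lemma poly_deg_le_on_mult:
  assumes "poly_deg_le_on S d f" and "poly_deg_le_on S d' g"
  shows "poly_deg_le_on S (d + d') (\<lambda>j. f j * g j)"
proof -
  obtain \<alpha> \<beta> where \<alpha>: "\<alpha> = 0 \<or> int (degree \<alpha>) \<le> d" "\<forall>j\<in>S. f j = poly \<alpha> (of_nat j)"
    and \<beta>: "\<beta> = 0 \<or> int (degree \<beta>) \<le> d'" "\<forall>j\<in>S. g j = poly \<beta> (of_nat j)"
    using assms unfolding poly_deg_le_on_def by blast
  have "\<alpha> * \<beta> = 0 \<or> int (degree (\<alpha> * \<beta>)) \<le> d + d'"
    using \<alpha>(1) \<beta>(1) degree_mult_le[of \<alpha> \<beta>] by auto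
  with \<alpha>(2) \<beta>(2) show ?thesis
    unfolding poly_deg_le_on_def by (intro exI[of _ "\<alpha> * \<beta>"]) simp
qed

lemma poly_deg_le_on_scale: "poly_deg_le_on S d f \<Longrightarrow> poly_deg_le_on S d (\<lambda>j. c * f j)"
  using poly_deg_le_on_mult[OF poly_deg_le_on_const[of 0 S c]] by simp

lemma poly_deg_le_on_diff:
  "poly_deg_le_on S d f \<Longrightarrow> poly_deg_le_on S d g \<Longrightarrow> poly_deg_le_on S d (\<lambda>j. f j - g j)"
  using poly_deg_le_on_add[of S d f "\<lambda>j. - 1 * g j"] poly_deg_le_on_scale[of S d g "- 1"] by simp

lemma poly_deg_le_on_sum:
  "finite A \<Longrightarrow> (\<And>i. i \<in> A \<Longrightarrow> poly_deg_le_on S d (f i)) \<Longrightarrow>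
     poly_deg_le_on S d (\<lambda>j. \<Sum>i\<in>A. f i j)"
  by (induction A rule: finite_induct) (auto intro: poly_deg_le_on_zero poly_deg_le_on_add)

lemma poly_deg_le_on_compose_linear:
  assumes "poly_deg_le_on UNIV d f" and "\<And>j. j \<in> S \<Longrightarrow> int (h j) = u * int j + v"
  shows "poly_deg_le_on S d (\<lambda>j. f (h j))"
proof -
  obtain \<alpha> where \<alpha>: "\<alpha> = 0 \<or> int (degree \<alpha>) \<le> d" "\<And>L. f L = poly \<alpha> (of_nat L)"
    using assms(1) unfolding poly_deg_le_on_def by blast
  define \<beta> :: "'a poly" where "\<beta> = [:of_int v, of_int u:]"
  have "pcompose \<alpha> \<beta> = 0 \<or> int (degree (pcompose \<alpha> \<beta>)) \<le> d"
    using \<alpha>(1) by (auto simp: \<beta>_def degree_pcompose degree_pCons_eq_if)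
  moreover have "f (h j) = poly (pcompose \<alpha> \<beta>) (of_nat j)" if "j \<in> S" for j
  proof -
    have "(of_nat (h j) :: 'a) = of_int (int (h j))" by simp
    also have "\<dots> = poly \<beta> (of_nat j)" using assms(2)[OF that] by (simp add: \<beta>_def algebra_simps)
    finally show ?thesis by (simp add: \<alpha>(2) poly_pcompose)
  qed
  ultimately show ?thesis
    unfolding poly_deg_le_on_def by blast
qed

lemma of_nat_power_Suc_eq_sum_power_sums:
  "(of_nat L :: 'a::comm_ring_1) ^ Suc k = (\<Sum>r\<le>k. of_nat (Suc k choose r) * (\<Sum>i<L. of_nat i ^ r))"
proof -
  have "(of_nat L :: 'a) ^ Suc k = (\<Sum>i<L. of_nat (Suc i) ^ Suc k - of_nat i ^ Suc k)"
    using sum_lessThan_telescope[of "\<lambda>i. (of_nat i :: 'a) ^ Suc k" L] by simp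
  also have "\<dots> = (\<Sum>i<L. \<Sum>r\<le>k. of_nat (Suc k choose r) * of_nat i ^ r)"
  proof (rule sum.cong[OF refl])
    fix i
    have "(of_nat (Suc i) :: 'a) ^ Suc k = (\<Sum>r\<le>Suc k. of_nat (Suc k choose r) * of_nat i ^ r)"
      using binomial_ring[of "of_nat i :: 'a" 1 "Suc k"] by (simp add: add.commute)
    then show "(of_nat (Suc i) :: 'a) ^ Suc k - of_nat i ^ Suc k
        = (\<Sum>r\<le>k. of_nat (Suc k choose r) * of_nat i ^ r)"
      by (simp add: sum.atMost_Suc)
  qed
  also have "\<dots> = (\<Sum>r\<le>k. of_nat (Suc k choose r) * (\<Sum>i<L. of_nat i ^ r))"
    by (subst sum.swap) (simp add: sum_distrib_left)
  finally show ?thesis .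
qed

lemma poly_deg_le_on_power_sum:
  "poly_deg_le_on UNIV (int k + 1) (\<lambda>L. \<Sum>i<L. (of_nat i :: 'a::field_char_0) ^ k)"
proof (induction k rule: less_induct)
  case (less k)
  define S where "S = (\<lambda>r L. \<Sum>i<L. (of_nat i :: 'a) ^ r)"
  have "S k L = (1 / of_nat (Suc k)) * (of_nat L ^ Suc k - (\<Sum>r<k. of_nat (Suc k choose r) * S r L))"
    for L
  proof -
    have "(of_nat L :: 'a) ^ Suc k
        = (\<Sum>r<k. of_nat (Suc k choose r) * S r L) + of_nat (Suc k) * S k L"
      unfolding of_nat_power_Suc_eq_sum_power_sums S_def
      by (simp add: lessThan_Suc_atMost[symmetric])
    moreover have "(of_nat (Suc k) :: 'a) \<noteq> 0"
      by (rule of_nat_neq_0)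
    ultimately show ?thesis
      by (simp add: field_simps del: of_nat_Suc)
  qed
  moreover have "poly_deg_le_on UNIV (int k + 1)
      (\<lambda>L. (1 / of_nat (Suc k)) * (of_nat L ^ Suc k - (\<Sum>r<k. of_nat (Suc k choose r) * S r L)))"
  proof (rule poly_deg_le_on_scale, intro poly_deg_le_on_diff poly_deg_le_on_sum finite_lessThan)
    show "poly_deg_le_on UNIV (int k + 1) (\<lambda>L. of_nat L ^ Suc k :: 'a)"
      using poly_deg_le_on_power[of UNIV "Suc k"] by (simp add: add.commute)
    show "poly_deg_le_on UNIV (int k + 1) (\<lambda>L. of_nat (Suc k choose r) * S r L)"
      if "r \<in> {..<k}" for r
    proof (rule poly_deg_le_on_scale, rule poly_deg_le_on_mono)
      show "poly_deg_le_on UNIV (int r + 1) (S r)"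
        using that less by (simp add: S_def)
    qed (use that in simp)
  qed
  ultimately show ?case
    unfolding S_def by simp
qed

lemma poly_deg_le_on_partial_sums:
  assumes "poly_deg_le_on UNIV d g"
  shows "poly_deg_le_on UNIV (d + 1) (\<lambda>L. \<Sum>i<L. g i)"
proof -
  obtain \<alpha> where \<alpha>: "\<alpha> = 0 \<or> int (degree \<alpha>) \<le> d" and g: "\<And>L. g L = poly \<alpha> (of_nat L)"
    using assms unfolding poly_deg_le_on_def by blast
  have sum_eq: "(\<Sum>i<L. g i) = (\<Sum>k\<le>degree \<alpha>. coeff \<alpha> k * (\<Sum>i<L. of_nat i ^ k))" for L
    unfolding g poly_altdef by (subst sum.swap) (simp add: sum_distrib_left)
  show ?thesis
  proof (cases "\<alpha> = 0")
    case True
    then show ?thesis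
      by (intro poly_deg_le_on_zero) (simp add: g)
  next
    case False
    with \<alpha> have "poly_deg_le_on UNIV (d + 1) (\<lambda>L. \<Sum>k\<le>degree \<alpha>. coeff \<alpha> k * (\<Sum>i<L. of_nat i ^ k))"
      by (intro poly_deg_le_on_sum poly_deg_le_on_scale finite_atMost)
        (auto intro: poly_deg_le_on_mono[OF poly_deg_le_on_power_sum])
    then show ?thesis
      by (simp add: sum_eq)
  qed
qed

lemma poly_deg_le_on_recurrence:
  assumes "\<And>L. w (Suc L) = w L + g L" and "poly_deg_le_on UNIV d g" and "0 \<le> d + 1"
  shows "poly_deg_le_on UNIV (d + 1) w"
proof -
  have partial_sums: "w L = w 0 + (\<Sum>i<L. g i)" for L
    by (induction L) (simp_all add: assms(1))
  have "poly_deg_le_on UNIV (d + 1) (\<lambda>L. w 0 + (\<Sum>i<L. g i))"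
    using poly_deg_le_on_const[OF assms(3)] poly_deg_le_on_partial_sums[OF assms(2)]
    by (rule poly_deg_le_on_add)
  then show ?thesis
    by (rule poly_deg_le_on_cong) (rule partial_sums[symmetric])
qed

lemma poly_deg_le_on_double_recurrence:
  fixes w :: "nat \<Rightarrow> nat \<Rightarrow> nat \<Rightarrow> 'a::field_char_0"
  assumes step: "\<And>e q L. w e q (Suc L) = w e q L
      + (if q = 0 then 0 else \<beta> * w e (q - 1) L) + (if e = 0 then 0 else \<gamma> L * w (e - 1) q L)"
    and \<gamma>: "poly_deg_le_on UNIV 1 \<gamma>"
  shows "poly_deg_le_on UNIV (2 * int e + int q) (w e q)"
proof (induction "e + q" arbitrary: e q rule: less_induct)
  case less
  have "poly_deg_le_on UNIV (2 * int e + int q - 1) (\<lambda>L. if q = 0 then 0 else \<beta> * w e (q - 1) L)"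
  proof (cases "q = 0")
    case False
    with less[of e "q - 1"] have "poly_deg_le_on UNIV (2 * int e + int q - 1) (w e (q - 1))"
      by (simp add: of_nat_diff add_diff_eq)
    from poly_deg_le_on_scale[OF this, of \<beta>] False show ?thesis
      by simp
  qed (simp add: poly_deg_le_on_zero)
  moreover have "poly_deg_le_on UNIV (2 * int e + int q - 1)
      (\<lambda>L. if e = 0 then 0 else \<gamma> L * w (e - 1) q L)"
  proof (cases "e = 0")
    case False
    with less[of "e - 1" q] have "poly_deg_le_on UNIV (2 * int (e - 1) + int q) (w (e - 1) q)"
      by simp
    from poly_deg_le_on_mult[OF \<gamma> this] False show ?thesis
      by (simp add: of_nat_diff algebra_simps)
  qed (simp add: poly_deg_le_on_zero)
  ultimately have "poly_deg_le_on UNIV (2 * int e + int q - 1) (\<lambda>L.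
      (if q = 0 then 0 else \<beta> * w e (q - 1) L) + (if e = 0 then 0 else \<gamma> L * w (e - 1) q L))"
    by (rule poly_deg_le_on_add)
  from poly_deg_le_on_recurrence[of "w e q", OF _ this] show ?case
    by (simp add: step add.assoc)
qed

lemma poly_deg_le_on_coeffXZ_prod_linXZ:
  fixes a b c s :: int
  assumes "a \<noteq> 0"
  shows "poly_deg_le_on UNIV (2 * int e + int q) (\<lambda>L.
    of_int (coeffXZ (\<Prod>i<L. linXZ (c + s * int i) b a) e q) / (of_int a ^ L :: 'a::field_char_0))"
proof -
  define w where "w e q L =
    (of_int (coeffXZ (\<Prod>i<L. linXZ (c + s * int i) b a) e q) / of_int a ^ L :: 'a)" for e q L
  have "w e q (Suc L) = w e q L
      + (if q = 0 then 0 else of_int b / of_int a * w e (q - 1) L)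
      + (if e = 0 then 0 else (of_int c + of_int s * of_nat L) / of_int a * w (e - 1) q L)"
    for e q L
    unfolding w_def prod.lessThan_Suc coeffXZ_mult_linXZ using assms
    by (simp add: field_simps)
  moreover have "poly_deg_le_on UNIV 1 (\<lambda>L. (of_int c + of_int s * of_nat L) / of_int a :: 'a)"
    using poly_deg_le_on_linear[of UNIV "of_int c / of_int a" "of_int s / of_int a"]
    by (simp add: add_divide_distrib)
  ultimately have "poly_deg_le_on UNIV (2 * int e + int q) (w e q)"
    by (rule poly_deg_le_on_double_recurrence)
  then show ?thesis
    by (simp add: w_def[abs_def])
qed

definition poly_coeffs_on ::
    "nat set \<Rightarrow> (nat \<Rightarrow> 'a::field_char_0) \<Rightarrow> int \<Rightarrow> (nat \<Rightarrow> int poly poly) \<Rightarrow> bool" where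
  "poly_coeffs_on S w \<delta> X \<longleftrightarrow>
     (\<forall>e q. poly_deg_le_on S (2 * int e + int q + \<delta>) (\<lambda>j. of_int (coeffXZ (X j) e q) / w j))"

lemma poly_coeffs_on_mult:
  assumes X: "poly_coeffs_on S w \<delta> X" and Y: "poly_coeffs_on S w' \<delta>' Y"
  shows "poly_coeffs_on S (\<lambda>j. w j * w' j) (\<delta> + \<delta>') (\<lambda>j. X j * Y j)"
  unfolding poly_coeffs_on_def
proof (intro allI)
  fix e q
  have "poly_deg_le_on S (2 * int e + int q + (\<delta> + \<delta>'))
     (\<lambda>j. \<Sum>e'\<le>e. \<Sum>q'\<le>q. of_int (coeffXZ (X j) e' q') / w j
                         * (of_int (coeffXZ (Y j) (e - e') (q - q')) / w' j))"
  proof (intro poly_deg_le_on_sum finite_atMost)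
    fix e' q' assume "e' \<in> {..e}" "q' \<in> {..q}"
    then have deg: "2 * int e + int q + (\<delta> + \<delta>')
        = (2 * int e' + int q' + \<delta>) + (2 * int (e - e') + int (q - q') + \<delta>')"
      by (simp add: of_nat_diff)
    show "poly_deg_le_on S (2 * int e + int q + (\<delta> + \<delta>'))
        (\<lambda>j. of_int (coeffXZ (X j) e' q') / w j
               * (of_int (coeffXZ (Y j) (e - e') (q - q')) / w' j))"
      using poly_deg_le_on_mult[OF X[unfolded poly_coeffs_on_def, rule_format, of e' q']
          Y[unfolded poly_coeffs_on_def, rule_format, of "e - e'" "q - q'"]]
      unfolding deg .
  qed
  then show "poly_deg_le_on S (2 * int e + int q + (\<delta> + \<delta>'))
      (\<lambda>j. of_int (coeffXZ (X j * Y j) e q) / (w j * w' j))"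
    by (simp add: coeffXZ_mult sum_divide_distrib)
qed

lemma poly_coeffs_on_prod_linXZ:
  assumes "a \<noteq> 0" and "\<And>j. j \<in> S \<Longrightarrow> int (L j) = u * int j + v"
  shows "poly_coeffs_on S (\<lambda>j. of_int a ^ L j :: 'a::field_char_0) 0
    (\<lambda>j. \<Prod>i<L j. linXZ (c + s * int i) b a)"
  unfolding poly_coeffs_on_def
proof (intro allI)
  fix e q
  show "poly_deg_le_on S (2 * int e + int q + 0)
      (\<lambda>j. of_int (coeffXZ (\<Prod>i<L j. linXZ (c + s * int i) b a) e q) / of_int a ^ L j :: 'a)"
    using poly_deg_le_on_compose_linear[where h = L,
        OF poly_deg_le_on_coeffXZ_prod_linXZ[OF assms(1)] assms(2)]
    by simp
qed

lemma poly_coeffs_on_linXZ: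
  "poly_coeffs_on S (\<lambda>_. 1 :: 'a::field_char_0) (-1) (\<lambda>j. linXZ (v + u * int j) b 0)"
  unfolding poly_coeffs_on_def
proof (intro allI)
  fix e q
  show "poly_deg_le_on S (2 * int e + int q + - 1)
      (\<lambda>j. of_int (coeffXZ (linXZ (v + u * int j) b 0) e q) / 1 :: 'a)"
  proof (cases "e = 1 \<and> q = 0")
    case True
    then show ?thesis
      using poly_deg_le_on_linear[of S "of_int v" "of_int u"] by (simp add: coeffXZ_linXZ)
  next
    case False
    then show ?thesis
      by (cases "e = 0 \<and> q = 1")
        (auto simp: coeffXZ_linXZ intro: poly_deg_le_on_const poly_deg_le_on_zero)
  qed
qed

lemma pochhammer_linXZ: "pochhammer (linXZ a b c) L = (\<Prod>i<L. linXZ a b (c + int i))"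
  by (simp add: pochhammer_prod atLeast0LessThan linXZ_def cst_eq_of_int add.assoc)

lemma prodA10_eq_prod_linXZ:
  "prodA10 n m j =
     (\<Prod>i<j - 1. linXZ 2 1 (m + 1 + int i)) * (\<Prod>i<j - 1. linXZ 1 2 (2 - int j + int i))
     * (\<Prod>i<2 * n - 2 * j - 2. linXZ 1 (-1) (m + 2 * int j + 2 + int i))
     * linXZ 0 (-3) (m + 3 * int j)"
proof -
  have factors: "cst 2 * varX + cst m + varZ + cst 1 = linXZ 2 1 (m + 1)"
    "varX + cst 2 * varZ - cst (int j) + cst 2 = linXZ 1 2 (2 - int j)"
    "varX + cst m + cst (2 * int j) - varZ + cst 2 = linXZ 1 (-1) (m + 2 * int j + 2)"
    "cst m + cst (3 * int j) - cst 3 * varZ = linXZ 0 (-3) (m + 3 * int j)"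
    by (simp_all add: linXZ_def cst_eq_of_int algebra_simps)
  show ?thesis
    unfolding prodA10_def factors pochhammer_linXZ ..
qed

lemma prod_lessThan_int_reflect:
  "(\<Prod>i<L. f (c + int i)) = (\<Prod>i<L. f (c + int L - 1 - int i))"
proof -
  have "(\<Prod>i<L. f (c + int i)) = (\<Prod>i<L. f (c + int (L - Suc i)))"
    by (rule prod.nat_diff_reindex[symmetric])
  also have "\<dots> = (\<Prod>i<L. f (c + int L - 1 - int i))"
    by (rule prod.cong) (auto simp: of_nat_diff algebra_simps)
  finally show ?thesis .
qed

definition prodA10_rev :: "nat \<Rightarrow> int \<Rightarrow> nat \<Rightarrow> int poly poly" where
  "prodA10_rev n m j =
     (\<Prod>i<j - 1. linXZ (m + 1 + int i) 1 2) * (\<Prod>i<j - 1. linXZ (- int i) 2 1)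
     * (\<Prod>i<2 * n - 2 * j - 2. linXZ (m + 2 * int n - 1 - int i) (-1) 1)
     * linXZ (m + 3 * int j) (-3) 0"

lemma x_reversal_prodA10:
  assumes "1 \<le> j" and "j \<le> n - 1"
  shows "x_reversal (2 * n - 3) (prodA10 n m j) (prodA10_rev n m j)"
proof -
  have degree: "2 * n - 3 = Suc (0 + (j - 1) + (j - 1) + (2 * n - 2 * j - 2))"
    using assms by simp
  have "x_reversal (Suc (0 + (j - 1) + (j - 1) + (2 * n - 2 * j - 2)))
     (1 * (\<Prod>i<j - 1. linXZ 2 1 (m + 1 + int i)) * (\<Prod>i<j - 1. linXZ 1 2 (2 - int j + int i))
      * (\<Prod>i<2 * n - 2 * j - 2. linXZ 1 (-1) (m + 2 * int j + 2 + int i))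
      * linXZ 0 (-3) (m + 3 * int j))
     (1 * (\<Prod>i<j - 1. linXZ (m + 1 + int i) 1 2) * (\<Prod>i<j - 1. linXZ (2 - int j + int i) 2 1)
      * (\<Prod>i<2 * n - 2 * j - 2. linXZ (m + 2 * int j + 2 + int i) (-1) 1)
      * linXZ (m + 3 * int j) (-3) 0)"
    by (intro x_reversal_mult_linXZ x_reversal_mult_prod_linXZ x_reversal_1)
  moreover have "(\<Prod>i<j - 1. linXZ (2 - int j + int i) 2 1) = (\<Prod>i<j - 1. linXZ (- int i) 2 1)"
    using prod_lessThan_int_reflect[of "\<lambda>c. linXZ c 2 1" "2 - int j" "j - 1"] assms(1)
    by (simp add: of_nat_diff)
  moreover have "(\<Prod>i<2 * n - 2 * j - 2. linXZ (m + 2 * int j + 2 + int i) (-1) 1)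
      = (\<Prod>i<2 * n - 2 * j - 2. linXZ (m + 2 * int n - 1 - int i) (-1) 1)"
    using prod_lessThan_int_reflect[of "\<lambda>c. linXZ c (-1) 1" "m + 2 * int j + 2" "2 * n - 2 * j - 2"]
      assms
    by (simp add: of_nat_diff algebra_simps)
  ultimately show ?thesis
    unfolding degree prodA10_eq_prod_linXZ prodA10_rev_def mult_1_left by simp
qed

lemma poly_coeffs_on_prodA10_rev:
  "poly_coeffs_on {1..n - 1} (\<lambda>j. 2 ^ (j - 1) :: rat) (-1) (prodA10_rev n m)"
proof -
  let ?S = "{1..n - 1}"
  have poch1: "poly_coeffs_on ?S (\<lambda>j. of_int 2 ^ (j - 1) :: rat) 0
      (\<lambda>j. \<Prod>i<j - 1. linXZ (m + 1 + 1 * int i) 1 2)"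
    by (rule poly_coeffs_on_prod_linXZ[where u = 1 and v = "-1"]) auto
  have poch2: "poly_coeffs_on ?S (\<lambda>j. of_int 1 ^ (j - 1) :: rat) 0
      (\<lambda>j. \<Prod>i<j - 1. linXZ (0 + (-1) * int i) 2 1)"
    by (rule poly_coeffs_on_prod_linXZ[where u = 1 and v = "-1"]) auto
  have poch3: "poly_coeffs_on ?S (\<lambda>j. of_int 1 ^ (2 * n - 2 * j - 2) :: rat) 0
      (\<lambda>j. \<Prod>i<2 * n - 2 * j - 2. linXZ (m + 2 * int n - 1 + (-1) * int i) (-1) 1)"
    by (rule poly_coeffs_on_prod_linXZ[where u = "-2" and v = "2 * int n - 2"]) auto
  have lin: "poly_coeffs_on ?S (\<lambda>_. 1 :: rat) (-1) (\<lambda>j. linXZ (m + 3 * int j) (-3) 0)"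
    by (rule poly_coeffs_on_linXZ)
  show ?thesis
    using poly_coeffs_on_mult[OF poly_coeffs_on_mult[OF poly_coeffs_on_mult[OF poch1 poch2] poch3] lin]
    unfolding prodA10_rev_def[abs_def] by simp
qed

lemma poly_deg_le_on_coeffXZ_prodA10:
  assumes "p + q \<le> 2 * n - 3"
  shows "poly_deg_le_on {1..n - 1} (2 * int (2 * n - 3 - p - q) + int q - 1)
    (\<lambda>j. of_int (coeffXZ (prodA10 n m j) p q) / 2 ^ j :: rat)"
proof -
  let ?e = "2 * n - 3 - p - q"
  have "poly_deg_le_on {1..n - 1} (2 * int ?e + int q - 1)
      (\<lambda>j. of_int (coeffXZ (prodA10_rev n m j) ?e q) / 2 ^ (j - 1) :: rat)"
    using poly_coeffs_on_prodA10_rev[of n m, unfolded poly_coeffs_on_def, rule_format, of ?e q]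
    by simp
  then have "poly_deg_le_on {1..n - 1} (2 * int ?e + int q - 1)
      (\<lambda>j. 1 / 2 * (of_int (coeffXZ (prodA10_rev n m j) ?e q) / 2 ^ (j - 1)) :: rat)"
    by (rule poly_deg_le_on_scale)
  then show ?thesis
  proof (rule poly_deg_le_on_cong)
    fix j :: nat
    assume j: "j \<in> {1..n - 1}"
    then have "coeffXZ (prodA10 n m j) p q = coeffXZ (prodA10_rev n m j) ?e q"
      using x_reversal_prodA10[of j n m] assms unfolding x_reversal_def by simp
    moreover have "(2 :: rat) ^ j = 2 * 2 ^ (j - 1)"
      using j by (cases j) simp_all
    ultimately show "1 / 2 * (of_int (coeffXZ (prodA10_rev n m j) ?e q) / 2 ^ (j - 1))
        = of_int (coeffXZ (prodA10 n m j) p q) / (2 ^ j :: rat)"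
      by simp
  qed
qed

theorem lemmaA10:
  fixes n p q :: nat and m :: int
  assumes "n \<ge> 2" and "m \<ge> 0"
    and "p \<le> 2 * n - 4" and "q \<le> 2 * n - 3" and "p + q \<le> 2 * n - 3"
  shows "\<exists>\<alpha> :: rat poly.
     (if 2 * (2 * int n - 3 - int p - int q) + int q - 1 < 0 then \<alpha> = 0
      else int (degree \<alpha>) \<le> 2 * (2 * int n - 3 - int p - int q) + int q - 1)
   \<and> (\<forall>j::nat. 1 \<le> j \<and> j \<le> n - 1 \<longrightarrow>
        of_int (coeffXZ (prodA10 n m j) p q) = 2 ^ j * poly \<alpha> (of_nat j))"
proof -
  have deg_bound:
    "2 * (2 * int n - 3 - int p - int q) + int q - 1 = 2 * int (2 * n - 3 - p - q) + int q - 1"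
    using assms(1,5) by (simp add: of_nat_diff)
  obtain \<alpha> :: "rat poly" where \<alpha>: "\<alpha> = 0 \<or> int (degree \<alpha>) \<le> 2 * int (2 * n - 3 - p - q) + int q - 1"
    and coeff: "\<forall>j\<in>{1..n - 1}. of_int (coeffXZ (prodA10 n m j) p q) / 2 ^ j = poly \<alpha> (of_nat j)"
    using poly_deg_le_on_coeffXZ_prodA10[OF assms(5), of m] unfolding poly_deg_le_on_def by blast
  show ?thesis
    unfolding deg_bound
  proof (intro exI[of _ \<alpha>] conjI allI impI)
    show "if 2 * int (2 * n - 3 - p - q) + int q - 1 < 0 then \<alpha> = 0
        else int (degree \<alpha>) \<le> 2 * int (2 * n - 3 - p - q) + int q - 1"
      using \<alpha> by auto
    show "of_int (coeffXZ (prodA10 n m j) p q) = 2 ^ j * poly \<alpha> (of_nat j)"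
      if "1 \<le> j \<and> j \<le> n - 1" for j
      using coeff that by (simp add: field_simps)
  qed
qed

end
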